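(* Let $\phi=(\phi_i)_{i\ge1}$ be a sequence of real numbers and define $\mathcal{H}_0^{\phi}=1$ and, for $n\ge0$, $\mathcal{H}_{n+1}^{\phi}(x)=2x\mathcal{H}_n^{\phi}(x)-(\mathcal{H}_n^{\phi})'(x)+\phi_{n+1}\mathcal{H}_n^{\phi}(x)$ (so $\mathcal{H}_n^\phi$ has degree $n$ and depends only on $\phi_1,\dots,\phi_n$). For $l\ge1$ let $\phi^{\{l\}}$ be the sequence obtained from $\phi$ by removing $\phi_l$ ($\phi^{\{l\}}_i=\phi_i$ for $i<l$, $\phi^{\{l\}}_i=\phi_{i+1}$ for $i\ge l$), and for a real $M$ let $\phi^{l,M}$ be the sequence $\phi^{l,M}_i=\phi_i+M\delta_{i,l}$. Then: (1) For every $n\ge0$, $\mathcal{H}_n^\phi$ has $n$ real and simple zeros, and for every $l\ge1$ the zeros of $\mathcal{H}_{n+1}^\phi$ interlace the zeros of $\mathcal{H}_n^{\phi^{\{l\}}}$. (2) Let $\zeta_k(n,\phi)$, $1\le k\le n$, denote the $k$-th zero of $\mathcal{H}_n^\phi$ in increasing order. If $\phi$ and $\rho$ are real sequences with $\phi_j\le\rho_j$ for all $j\ge1$, then $\zeta_k(n,\rho)\le\zeta_k(n,\phi)$ for all $1\le k\le n$. (3) Let $l\le n$ be positive integers and $M\neq0$ real. If $M>0$, the zeros of $\mathcal{H}_n^{\phi^{l,M}}$ interlace the zeros of $\mathcal{H}_n^\phi$; if $M<0$, the zeros of $\mathcal{H}_n^{\phi}$ interlace the zeros of $\mathcal{H}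_n^{\phi^{l,M}}$.
   Context: $\delta_{i,l}$ is the Kronecker delta. Interlacing: given two finite sets $U,V$ of real numbers, $U$ (strictly) interlaces $V$ if $\min U<\min V$ and between any two consecutive elements of either of the two sets there is an element of the other; "the zeros of $p$ interlace the zeros of $q$" means the corresponding sets of zeros satisfy this. *)

theory Defs
  imports "HOL-Computational_Algebra.Polynomial"
begin

text \<open>Sequences \<phi> = (\<phi>_i)_{i \<ge> 1} are modelled as functions nat \<Rightarrow> real; the value at 0 is ignored.\<close>

fun Hphi :: "(nat \<Rightarrow> real) \<Rightarrow> nat \<Rightarrow> real poly" where
  "Hphi \<phi> 0 = 1"
| "Hphi \<phi> (Suc n) = [:0, 2:] * Hphi \<phi> n - pderiv (Hphi \<phi> n) + smult (\<phi> (Suc n)) (Hphi \<phi> n)"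

definition remove_at :: "nat \<Rightarrow> (nat \<Rightarrow> real) \<Rightarrow> nat \<Rightarrow> real" where
  "remove_at l \<phi> = (\<lambda>i. if i < l then \<phi> i else \<phi> (Suc i))"

definition perturb :: "nat \<Rightarrow> real \<Rightarrow> (nat \<Rightarrow> real) \<Rightarrow> nat \<Rightarrow> real" where
  "perturb l M \<phi> = (\<lambda>i. \<phi> i + (if i = l then M else 0))"

definition zeros :: "real poly \<Rightarrow> real set" where
  "zeros p = {x. poly p x = 0}"

definition consecutive :: "real set \<Rightarrow> real \<Rightarrow> real \<Rightarrow> bool" where
  "consecutive S a b \<longleftrightarrow> a \<in> S \<and> b \<in> S \<and> a < b \<and> \<not> (\<exists>c\<in>S. a < c \<and> c < b)"

definition interlaces :: "real set \<Rightarrow> real set \<Rightarrow> bool" where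
  "interlaces U V \<longleftrightarrow> finite U \<and> finite V \<and> U \<noteq> {} \<and>
     (V \<noteq> {} \<longrightarrow> Min U < Min V) \<and>
     (\<forall>a b. consecutive U a b \<longrightarrow> (\<exists>v\<in>V. a < v \<and> v < b)) \<and>
     (\<forall>a b. consecutive V a b \<longrightarrow> (\<exists>u\<in>U. a < u \<and> u < b))"

text \<open>k-th zero (1-based) in increasing order.\<close>
definition kth_zero :: "nat \<Rightarrow> (nat \<Rightarrow> real) \<Rightarrow> nat \<Rightarrow> real" where
  "kth_zero n \<phi> k = sorted_list_of_set (zeros (Hphi \<phi> n)) ! (k - 1)"

end

theory Submission
  imports Defs
begin

text \<open>The polynomials arise by iterating the commuting operators T_c p = (2x + c) p - p',
  so that H^\<phi>_(n+1) = T_(\<phi>_l) H^(\<phi> without \<phi>_l)_n for every l \<le> n + 1.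
  If p = C (x - z_0) ... (x - z_(n-1)) with C > 0 and z_0 < ... < z_(n-1), then
  T_c p (z_k) = - p'(z_k) alternates in sign; together with the signs at +/- infinity this puts
  a zero of T_c p into each of the n + 1 gaps of the z_k, so the zeros of T_c p are simple and
  interlace those of p. Since T_(c+M) p = T_c p + M p, at a zero w of T_c p the perturbed
  polynomial has the sign of M p(w), and for M > 0 this forces its zero in the same gap to lie
  left of w. Monotonicity in \<phi> follows by raising the parameters one at a time.\<close>

section \<open>The step operator\<close>

definition hermite_step :: "real \<Rightarrow> real poly \<Rightarrow> real poly" where
  "hermite_step c p = [:c, 2:] * p - pderiv p"

lemma Hphi_Suc_hermite_step: "Hphi \<phi> (Suc n) = hermite_step (\<phi> (Suc n)) (Hphi \<phi> n)"
  by (simp add: hermite_step_def algebra_simps smult_add_left)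

lemma hermite_step_commute: "hermite_step a (hermite_step b p) = hermite_step b (hermite_step a p)"
  by (simp add: hermite_step_def pderiv_mult pderiv_diff pderiv_pCons pderiv_add pderiv_smult
      algebra_simps)

lemma hermite_step_add: "hermite_step (c + M) p = hermite_step c p + smult M p"
  by (simp add: hermite_step_def algebra_simps smult_add_left)

lemma
  assumes "p \<noteq> 0"
  shows degree_hermite_step: "degree (hermite_step c p) = Suc (degree p)"
    and lead_coeff_hermite_step: "lead_coeff (hermite_step c p) = 2 * lead_coeff p"
proof -
  have coeff_Suc: "coeff (hermite_step c p) (Suc (degree p)) = 2 * lead_coeff p"
    by (simp add: hermite_step_def coeff_pderiv coeff_eq_0)
  have "degree ([:c, 2:] * p) \<le> Suc (degree p)"
    using degree_mult_le[of "[:c, 2:]" p] by simp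
  moreover have "degree (pderiv p) \<le> Suc (degree p)"
    by (simp add: degree_pderiv)
  ultimately have "degree (hermite_step c p) \<le> Suc (degree p)"
    unfolding hermite_step_def by (rule degree_diff_le)
  moreover have "coeff (hermite_step c p) (Suc (degree p)) \<noteq> 0"
    using coeff_Suc assms by simp
  ultimately show "degree (hermite_step c p) = Suc (degree p)"
    by (simp add: le_antisym le_degree)
  with coeff_Suc show "lead_coeff (hermite_step c p) = 2 * lead_coeff p"
    by simp
qed

lemma Hphi_cong: "(\<And>i. 1 \<le> i \<Longrightarrow> i \<le> n \<Longrightarrow> \<phi> i = \<psi> i) \<Longrightarrow> Hphi \<phi> n = Hphi \<psi> n"
  by (induction n) auto

text \<open>Since the steps commute, \<open>\<phi>\<^sub>l\<close> may be applied last.\<close>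
lemma Hphi_remove_at:
  assumes "1 \<le> l" "l \<le> Suc n"
  shows "Hphi \<phi> (Suc n) = hermite_step (\<phi> l) (Hphi (remove_at l \<phi>) n)"
  using assms
proof (induction n)
  case 0
  then show ?case by (simp only: Hphi_Suc_hermite_step) (simp add: remove_at_def)
next
  case (Suc n)
  show ?case
  proof (cases "l = Suc (Suc n)")
    case True
    have "Hphi (remove_at l \<phi>) (Suc n) = Hphi \<phi> (Suc n)"
      by (rule Hphi_cong) (auto simp: remove_at_def True)
    then show ?thesis
      using True by (simp only: Hphi_Suc_hermite_step)
  next
    case False
    then have l: "l \<le> Suc n"
      using Suc.prems by simp
    have "Hphi \<phi> (Suc (Suc n))
        = hermite_step (\<phi> (Suc (Suc n))) (hermite_step (\<phi> l) (Hphi (remove_at l \<phi>) n))"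
      using Suc.IH[OF Suc.prems(1) l] by (simp only: Hphi_Suc_hermite_step)
    also have "\<dots> = hermite_step (\<phi> l) (hermite_step (remove_at l \<phi> (Suc n)) (Hphi (remove_at l \<phi>) n))"
      using l by (simp add: hermite_step_commute remove_at_def)
    finally show ?thesis
      by (simp only: Hphi_Suc_hermite_step)
  qed
qed

lemma Hphi_remove_at_step:
  assumes "1 \<le> l"
  obtains c where "Hphi \<phi> (Suc n) = hermite_step c (Hphi (remove_at l \<phi>) n)"
proof (cases "l \<le> Suc n")
  case True
  then show ?thesis
    using Hphi_remove_at[OF assms] that by blast
next
  case False
  then have "Hphi (remove_at l \<phi>) n = Hphi \<phi> n"
    by (intro Hphi_cong) (simp add: remove_at_def)
  then show ?thesis
    using that Hphi_Suc_hermite_step by metis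
qed

lemma remove_at_perturb: "remove_at l (perturb l M \<phi>) = remove_at l \<phi>"
  by (auto simp: remove_at_def perturb_def)

lemma perturb_perturb_uminus: "perturb l (- M) (perturb l M \<phi>) = \<phi>"
  by (auto simp: perturb_def)

lemma Hphi_perturb:
  assumes "1 \<le> l" "l \<le> Suc n"
  shows "Hphi (perturb l M \<phi>) (Suc n) = hermite_step (\<phi> l + M) (Hphi (remove_at l \<phi>) n)"
proof -
  have "perturb l M \<phi> l = \<phi> l + M"
    by (simp add: perturb_def)
  then show ?thesis
    using Hphi_remove_at[OF assms, of "perturb l M \<phi>"] by (simp only: remove_at_perturb)
qed

section \<open>Linear factors and signs of real polynomials\<close>

lemma poly_prod_linear:
  fixes x :: "'a::comm_ring_1"
  shows "poly (\<Prod>z\<leftarrow>zs. [:-z, 1:]) x = (\<Prod>z\<leftarrow>zs. x - z)"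
  by (induction zs) (simp_all add: poly_mult left_diff_distrib del: mult_pCons_left)

lemma prod_linear_monic:
  "degree (\<Prod>z\<leftarrow>zs. [:-z, 1:]) = length zs \<and> lead_coeff (\<Prod>z\<leftarrow>zs. [:-z, 1:]) = (1::'a::idom)"
proof (induction zs)
  case (Cons a zs)
  then have deg: "degree (\<Prod>z\<leftarrow>zs. [:-z, 1:]) = length zs"
    and lead: "lead_coeff (\<Prod>z\<leftarrow>zs. [:-z, 1:]) = (1::'a)"
    by auto
  then have "degree ([:-a, 1:] * (\<Prod>z\<leftarrow>zs. [:-z, 1:])) = Suc (length zs)"
    by (subst degree_mult_eq) auto
  moreover have "lead_coeff ([:-a, 1:] * (\<Prod>z\<leftarrow>zs. [:-z, 1:])) = 1"
    by (simp only: lead_coeff_mult lead) simp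
  ultimately show ?case
    unfolding list.map prod_list.Cons length_Cons by blast
qed simp

lemma prod_linear_sign:
  fixes x :: "'a::linordered_idom"
  assumes "x \<notin> set zs"
  shows "0 < (-1) ^ length (filter (\<lambda>z. x < z) zs) * (\<Prod>z\<leftarrow>zs. x - z)"
  using assms
proof (induction zs)
  case (Cons z zs)
  then have IH: "0 < (-1) ^ length (filter (\<lambda>z. x < z) zs) * (\<Prod>z\<leftarrow>zs. x - z)" and "x \<noteq> z"
    by auto
  then show ?case
    by (cases "x < z") (auto simp: algebra_simps intro: mult_strict_right_mono)
qed simp

lemma prod_linear_dvd:
  fixes p :: "'a::idom poly"
  assumes "distinct zs" "\<forall>z\<in>set zs. poly p z = 0"
  shows "(\<Prod>z\<leftarrow>zs. [:-z, 1:]) dvd p"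
  using assms
proof (induction zs)
  case (Cons z zs)
  then obtain r where r: "p = (\<Prod>z\<leftarrow>zs. [:-z, 1:]) * r"
    by auto
  have "poly (\<Prod>z\<leftarrow>zs. [:-z, 1:]) z \<noteq> 0"
    using Cons.prems(1) by (auto simp: poly_prod_linear prod_list_zero_iff)
  then have "poly r z = 0"
    using Cons.prems(2) r by simp
  then obtain s where "r = [:-z, 1:] * s"
    by (auto simp: poly_eq_0_iff_dvd)
  then have "p = ([:-z, 1:] * (\<Prod>z\<leftarrow>zs. [:-z, 1:])) * s"
    using r by (simp only: ac_simps)
  then show ?case
    unfolding list.map prod_list.Cons by (rule dvdI)
qed simp

lemma poly_eq_smult_prod_linear:
  fixes q :: "'a::idom poly"
  assumes "q \<noteq> 0" "degree q = length ws" "distinct ws" "\<forall>w\<in>set ws. poly q w = 0"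
  shows "q = smult (lead_coeff q) (\<Prod>w\<leftarrow>ws. [:-w, 1:])"
proof -
  obtain r where r: "q = (\<Prod>w\<leftarrow>ws. [:-w, 1:]) * r"
    using prod_linear_dvd[OF assms(3,4)] by (elim dvdE)
  have P: "degree (\<Prod>w\<leftarrow>ws. [:-w, 1:]) = length ws" "lead_coeff (\<Prod>w\<leftarrow>ws. [:-w, 1:]) = (1::'a)"
    "(\<Prod>w\<leftarrow>ws. [:-w, 1:]) \<noteq> (0::'a poly)"
    using prod_linear_monic[of ws] by auto
  have "r \<noteq> 0"
    using r assms(1) by auto
  then have "degree q = length ws + degree r"
    using r P(1,3) by (simp add: degree_mult_eq)
  then have "degree r = 0"
    using assms(2) by simp
  then obtain C where C: "r = [:C:]"
    using degree_0_id by metis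
  have "lead_coeff q = lead_coeff (\<Prod>w\<leftarrow>ws. [:-w, 1:]) * lead_coeff r"
    using r by (simp only: lead_coeff_mult)
  then have "lead_coeff q = C"
    using P(2) C by simp
  moreover have "q = smult C (\<Prod>w\<leftarrow>ws. [:-w, 1:])"
    using r C by simp
  ultimately show ?thesis
    by metis
qed

lemma poly_pderiv_at_linear_factor:
  fixes A B :: "'a::idom poly"
  shows "poly (pderiv (A * ([:-z, 1:] * B))) z = poly A z * poly B z"
  unfolding pderiv_mult poly_add poly_mult by (simp add: pderiv_pCons)

lemma poly_pos_at_top:
  fixes q :: "real poly"
  assumes "lead_coeff q > 0"
  shows "\<exists>R\<ge>a. 0 < poly q R"
proof -
  obtain n where "\<forall>x\<ge>n. lead_coeff q \<le> poly q x"
    using poly_pinfty_gt_lc[OF assms] by blast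
  then have "lead_coeff q \<le> poly q (max a n)"
    by simp
  then show ?thesis
    using assms by (intro exI[of _ "max a n"]) auto
qed

lemma poly_sign_at_bot:
  fixes q :: "real poly"
  assumes "lead_coeff q > 0"
  shows "\<exists>L\<le>a. 0 < (-1) ^ degree q * poly q L"
proof -
  define q' where "q' = smult ((-1) ^ degree q) (pcompose q [:0, -1:])"
  have "lead_coeff (pcompose q [:0, -1:]) = lead_coeff q * (-1) ^ degree q"
    using lead_coeff_comp[of "[:0, -1:]" q] by simp
  then have "lead_coeff q' = lead_coeff q"
    by (simp add: q'_def flip: power_mult_distrib)
  then obtain R where "R \<ge> - a" "0 < poly q' R"
    using poly_pos_at_top assms by metis
  then show ?thesis
    by (intro exI[of _ "- R"]) (simp add: q'_def poly_pcompose)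
qed

definition interleaved :: "real list \<Rightarrow> real list \<Rightarrow> bool" where
  "interleaved xs ys \<longleftrightarrow> length ys \<le> length xs \<and> length xs \<le> Suc (length ys) \<and>
     (\<forall>k<length ys. xs ! k < ys ! k) \<and> (\<forall>k. Suc k < length xs \<longrightarrow> ys ! k < xs ! Suc k)"

lemma interleaved_sorted:
  assumes "interleaved xs ys"
  shows "sorted_wrt (<) xs" "sorted_wrt (<) ys"
proof -
  have "xs ! k < xs ! Suc k" if k: "Suc k < length xs" for k
  proof -
    have "k < length ys"
      using assms k by (simp add: interleaved_def)
    then have "xs ! k < ys ! k"
      using assms by (simp add: interleaved_def)
    also have "ys ! k < xs ! Suc k"
      using assms k by (simp add: interleaved_def)
    finally show ?thesis .
  qed
  then show "sorted_wrt (<) xs"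
    by (simp add: sorted_wrt_iff_nth_Suc_transp[OF transp_on_less])
  have "ys ! k < ys ! Suc k" if k: "Suc k < length ys" for k
  proof -
    have "Suc k < length xs"
      using assms k by (simp add: interleaved_def)
    then have "ys ! k < xs ! Suc k"
      using assms by (simp add: interleaved_def)
    also have "xs ! Suc k < ys ! Suc k"
      using assms k by (simp add: interleaved_def)
    finally show ?thesis .
  qed
  then show "sorted_wrt (<) ys"
    by (simp add: sorted_wrt_iff_nth_Suc_transp[OF transp_on_less])
qed

lemma Min_set_sorted: "sorted_wrt (<) xs \<Longrightarrow> xs \<noteq> [] \<Longrightarrow> Min (set xs) = xs ! 0"
  by (cases xs) (auto intro!: Min_eqI simp: less_imp_le)

lemma consecutive_sorted:
  assumes sorted: "sorted_wrt (<) xs" and "consecutive (set xs) a b"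
  obtains i where "Suc i < length xs" "a = xs ! i" "b = xs ! Suc i"
proof -
  obtain i j where ij: "i < length xs" "j < length xs" "a = xs ! i" "b = xs ! j" "a < b"
    and gap: "\<not> (\<exists>c\<in>set xs. a < c \<and> c < b)"
    using assms(2) by (auto simp: consecutive_def in_set_conv_nth)
  have "i < j"
    using ij sorted_wrt_nth_less[OF sorted, of j i] by (metis less_asym linorder_neqE_nat)
  moreover have "\<not> Suc i < j"
    using ij gap sorted_wrt_nth_less[OF sorted] by (metis lessI less_trans nth_mem)
  ultimately show ?thesis
    using that ij by (metis Suc_lessI)
qed

lemma interlaces_if_interleaved:
  assumes il: "interleaved xs ys" and "xs \<noteq> []"
  shows "interlaces (set xs) (set ys)"
  unfolding interlaces_def
proof (intro conjI allI impI)
  note sorted = interleaved_sorted[OF il]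
  show "finite (set xs)" "finite (set ys)" "set xs \<noteq> {}"
    using assms(2) by auto
  show "Min (set xs) < Min (set ys)" if "set ys \<noteq> {}"
    using that il by (auto simp: Min_set_sorted[OF sorted(1) assms(2)] Min_set_sorted[OF sorted(2)]
        interleaved_def)
  fix a b
  show "\<exists>v\<in>set ys. a < v \<and> v < b" if cons: "consecutive (set xs) a b"
  proof -
    obtain i where "Suc i < length xs" "a = xs ! i" "b = xs ! Suc i"
      using consecutive_sorted[OF sorted(1) cons] .
    then show ?thesis
      using il by (intro bexI[of _ "ys ! i"]) (auto simp: interleaved_def)
  qed
  show "\<exists>u\<in>set xs. a < u \<and> u < b" if cons: "consecutive (set ys) a b"
  proof -
    obtain i where "Suc i < length ys" "a = ys ! i" "b = ys ! Suc i"
      using consecutive_sorted[OF sorted(2) cons] .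
    then show ?thesis
      using il by (intro bexI[of _ "xs ! Suc i"]) (auto simp: interleaved_def)
  qed
qed

lemma interleaved_gap:
  assumes "interleaved ws zs" "length ws = Suc (length zs)" "k \<le> length zs"
  shows "0 < k \<Longrightarrow> zs ! (k - 1) < ws ! k" "k < length zs \<Longrightarrow> ws ! k < zs ! k"
  using assms by (auto simp: interleaved_def elim!: allE[of _ "k - 1"])

lemma sorted_take_less_drop_greater:
  fixes zs :: "'a::linorder list"
  assumes "sorted_wrt (<) zs" "k \<le> length zs"
    and "0 < k \<Longrightarrow> zs ! (k - 1) < x" "k < length zs \<Longrightarrow> x < zs ! k"
  shows "\<forall>z\<in>set (take k zs). z < x" "\<forall>z\<in>set (drop k zs). x < z"
proof -
  show "\<forall>z\<in>set (take k zs). z < x"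
  proof
    fix z assume "z \<in> set (take k zs)"
    then obtain i where i: "i < k" "z = zs ! i"
      using assms(2) by (auto simp: in_set_conv_nth)
    have "z \<le> zs ! (k - 1)"
    proof (cases "i = k - 1")
      case False
      then have "i < k - 1" "k - 1 < length zs"
        using i(1) assms(2) by auto
      then show ?thesis
        using sorted_wrt_nth_less[OF assms(1)] i(2) by (simp add: less_imp_le)
    qed (simp add: i)
    then show "z < x"
      using assms(3) i by simp
  qed
  show "\<forall>z\<in>set (drop k zs). x < z"
  proof
    fix z assume "z \<in> set (drop k zs)"
    then obtain j where j: "j < length zs - k" "z = zs ! (k + j)"
      by (auto simp: in_set_conv_nth)
    then have k: "k < length zs" "k + j < length zs"
      by auto
    then have "zs ! k \<le> z"
      using sorted_wrt_nth_less[OF assms(1), of k "k + j"] j(2) by (cases "j = 0") auto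
    then show "x < z"
      using assms(4)[OF k(1)] by simp
  qed
qed

section \<open>Polynomials with sorted simple zeros\<close>

definition sorted_simple_roots :: "real poly \<Rightarrow> real list \<Rightarrow> bool" where
  "sorted_simple_roots p zs \<longleftrightarrow> sorted_wrt (<) zs \<and> (\<exists>C>0. p = smult C (\<Prod>z\<leftarrow>zs. [:-z, 1:]))"

lemma sorted_simple_roots_degree:
  assumes "sorted_simple_roots p zs"
  shows "p \<noteq> 0" "degree p = length zs" "lead_coeff p > 0"
  using assms prod_linear_monic[of zs] by (auto simp: sorted_simple_roots_def)

lemma sorted_simple_roots_poly_eq_0: "sorted_simple_roots p zs \<Longrightarrow> poly p x = 0 \<longleftrightarrow> x \<in> set zs"
  by (auto simp: sorted_simple_roots_def poly_prod_linear prod_list_zero_iff)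

lemma zeros_sorted_simple_roots: "sorted_simple_roots p zs \<Longrightarrow> zeros p = set zs"
  by (auto simp: zeros_def sorted_simple_roots_poly_eq_0)

lemma sorted_list_of_zeros: "sorted_simple_roots p zs \<Longrightarrow> sorted_list_of_set (zeros p) = zs"
  by (metis sorted_list_of_set.idem_if_sorted_distinct strict_sorted_iff
      sorted_simple_roots_def zeros_sorted_simple_roots)

lemma sorted_simple_roots_sign:
  assumes "sorted_simple_roots p zs" "x \<notin> set zs"
  shows "0 < (-1) ^ length (filter (\<lambda>z. x < z) zs) * poly p x"
  using assms prod_linear_sign[OF assms(2)]
  by (auto simp: sorted_simple_roots_def poly_prod_linear mult.left_commute)

lemma sorted_simple_roots_sign_between:
  assumes p: "sorted_simple_roots p zs" and k: "k \<le> length zs"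
    and "0 < k \<Longrightarrow> zs ! (k - 1) < x" "k < length zs \<Longrightarrow> x < zs ! k"
  shows "0 < (-1) ^ (length zs - k) * poly p x"
proof -
  have sorted: "sorted_wrt (<) zs"
    using p by (simp add: sorted_simple_roots_def)
  note below = sorted_take_less_drop_greater(1)[OF sorted k assms(3,4)]
  note above = sorted_take_less_drop_greater(2)[OF sorted k assms(3,4)]
  have "filter (\<lambda>z. x < z) zs = drop k zs"
  proof -
    have "filter (\<lambda>z. x < z) zs = filter (\<lambda>z. x < z) (take k zs) @ filter (\<lambda>z. x < z) (drop k zs)"
      by (metis append_take_drop_id filter_append)
    also have "\<dots> = drop k zs"
      using below above by (auto simp: filter_empty_conv)
    finally show ?thesis .
  qed
  moreover have "x \<notin> set zs"
    using below above by (metis Un_iff append_take_drop_id less_irrefl set_append)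
  ultimately show ?thesis
    using sorted_simple_roots_sign[OF p, of x] by simp
qed

lemma sorted_simple_roots_pderiv_sign:
  assumes p: "sorted_simple_roots p zs" and k: "k < length zs"
  shows "0 < (-1) ^ (length zs - Suc k) * poly (pderiv p) (zs ! k)"
proof -
  obtain C where C: "C > 0" "p = smult C (\<Prod>z\<leftarrow>zs. [:-z, 1:])" and sorted: "sorted_wrt (<) zs"
    using p by (auto simp: sorted_simple_roots_def)
  define z where "z = zs ! k"
  define A where "A = (\<Prod>y\<leftarrow>take k zs. [:-y, 1:])"
  define B where "B = (\<Prod>y\<leftarrow>drop (Suc k) zs. [:-y, 1:])"
  have "p = smult C (A * ([:-z, 1:] * B))"
    using C(2) id_take_nth_drop[OF k] unfolding A_def B_def z_def by (metis list.map(2) map_append prod_list.Cons prod_list.append)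
  then have "poly (pderiv p) z = C * poly A z * poly B z"
    by (simp only: pderiv_smult poly_smult poly_pderiv_at_linear_factor mult.assoc)
  moreover have "sorted_wrt (<) (take k zs @ z # drop (Suc k) zs)"
    using sorted id_take_nth_drop[OF k] by (simp add: z_def)
  then have below: "\<forall>y\<in>set (take k zs). y < z" and above: "\<forall>y\<in>set (drop (Suc k) zs). z < y"
    by (auto simp: sorted_wrt_append)
  have "filter (\<lambda>y. z < y) (take k zs) = []" "z \<notin> set (take k zs)"
    using below by (auto simp: filter_empty_conv)
  then have "0 < poly A z"
    using prod_linear_sign[of z "take k zs"] by (simp add: A_def poly_prod_linear)
  moreover have "filter (\<lambda>y. z < y) (drop (Suc k) zs) = drop (Suc k) zs"
    using above by simp
  then have "0 < (-1) ^ (length zs - Suc k) * poly B z"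
    using prod_linear_sign[of z "drop (Suc k) zs"] above by (auto simp: B_def poly_prod_linear)
  ultimately show ?thesis
    using C(1) by (simp add: z_def mult.left_commute)
qed

lemma order_sorted_simple_roots:
  assumes p: "sorted_simple_roots p zs" and x: "x \<in> set zs"
  shows "order x p = 1"
proof -
  obtain k where k: "k < length zs" "x = zs ! k"
    using x by (auto simp: in_set_conv_nth)
  then have "poly (pderiv p) x \<noteq> 0"
    using sorted_simple_roots_pderiv_sign[OF p k(1)] by auto
  moreover have "poly p x = 0"
    using sorted_simple_roots_poly_eq_0[OF p] x by simp
  ultimately show ?thesis
    using order_pderiv[OF sorted_simple_roots_degree(1)[OF p]] order_0I by simp
qed

lemma sorted_simple_roots_of_sign_changes:
  fixes q :: "real poly"
  assumes q: "lead_coeff q > 0" "degree q = m"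
    and bs: "sorted_wrt (<) bs" "length bs = Suc m"
    and sign: "\<forall>k\<le>m. 0 < (-1) ^ (m - k) * poly q (bs ! k)"
  shows "\<exists>ws. sorted_simple_roots q ws \<and> length ws = m \<and>
    (\<forall>k<m. bs ! k < ws ! k \<and> ws ! k < bs ! Suc k)"
proof -
  have "\<forall>k<m. \<exists>w. bs ! k < w \<and> w < bs ! Suc k \<and> poly q w = 0"
  proof (intro allI impI)
    fix k assume k: "k < m"
    have "0 < (-1) ^ Suc (m - Suc k) * poly q (bs ! k)"
      using sign k by (metis Suc_diff_Suc less_imp_le)
    moreover have "0 < (-1) ^ (m - Suc k) * poly q (bs ! Suc k)"
      using sign k by simp
    ultimately have "poly q (bs ! k) * poly q (bs ! Suc k) < 0"
      by (cases "even (m - Suc k)") (auto simp: mult_less_0_iff)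
    moreover have "bs ! k < bs ! Suc k"
      using sorted_wrt_nth_less[OF bs(1), of k "Suc k"] bs(2) k by simp
    ultimately show "\<exists>w. bs ! k < w \<and> w < bs ! Suc k \<and> poly q w = 0"
      using poly_IVT by blast
  qed
  then obtain w where w: "\<forall>k<m. bs ! k < w k \<and> w k < bs ! Suc k \<and> poly q (w k) = 0"
    by metis
  define ws where "ws = map w [0..<m]"
  have sorted: "sorted_wrt (<) ws"
    unfolding sorted_wrt_iff_nth_Suc_transp[OF transp_on_less]
  proof (intro allI impI)
    fix k assume k: "Suc k < length ws"
    then have "w k < bs ! Suc k" "bs ! Suc k < w (Suc k)"
      using w by (simp_all add: ws_def)
    then show "ws ! k < ws ! Suc k"
      using k by (simp add: ws_def nth_append del: upt_Suc)
  qed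
  have "q = smult (lead_coeff q) (\<Prod>w\<leftarrow>ws. [:-w, 1:])"
    using q sorted w by (intro poly_eq_smult_prod_linear) (auto simp: strict_sorted_iff ws_def)
  then have "sorted_simple_roots q ws"
    using q(1) sorted by (auto simp: sorted_simple_roots_def)
  then show ?thesis
    using w by (auto simp: ws_def)
qed

lemma hermite_step_sorted_simple_roots_degree:
  assumes "sorted_simple_roots p zs"
  shows "degree (hermite_step c p) = Suc (length zs)" "lead_coeff (hermite_step c p) > 0"
proof -
  note p = sorted_simple_roots_degree[OF assms]
  show "degree (hermite_step c p) = Suc (length zs)"
    using p by (simp add: degree_hermite_step)
  show "lead_coeff (hermite_step c p) > 0"
    unfolding lead_coeff_hermite_step[OF p(1)] using p(3) by simp
qed

lemma hermite_step_sign_at_root: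
  assumes p: "sorted_simple_roots p zs" and k: "k < length zs"
  shows "0 < (-1) ^ (length zs - k) * poly (hermite_step c p) (zs ! k)"
proof -
  have "poly p (zs ! k) = 0"
    using sorted_simple_roots_poly_eq_0[OF p] k by simp
  then have "poly (hermite_step c p) (zs ! k) = - poly (pderiv p) (zs ! k)"
    by (simp add: hermite_step_def)
  moreover have "length zs - k = Suc (length zs - Suc k)"
    using k by simp
  ultimately show ?thesis
    using sorted_simple_roots_pderiv_sign[OF p k] by simp
qed

lemma hermite_step_alternating_signs:
  assumes p: "sorted_simple_roots p zs"
  obtains L R where "sorted_wrt (<) (L # zs @ [R])"
    and "\<forall>k\<le>Suc (length zs).
      0 < (-1) ^ (Suc (length zs) - k) * poly (hermite_step c p) ((L # zs @ [R]) ! k)"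
proof -
  define n where "n = length zs"
  define q where "q = hermite_step c p"
  have q: "degree q = Suc n" "lead_coeff q > 0"
    using hermite_step_sorted_simple_roots_degree[OF p] by (simp_all add: q_def n_def)
  obtain R where R: "Max (insert 0 (set zs)) + 1 \<le> R" "0 < poly q R"
    using poly_pos_at_top[OF q(2)] by blast
  obtain L where L: "L \<le> Min (insert 0 (set zs)) - 1" "0 < (-1) ^ Suc n * poly q L"
    using poly_sign_at_bot[OF q(2)] q(1) by metis
  have bounds: "L < z \<and> z < R" if "z \<in> insert 0 (set zs)" for z
  proof -
    have "Min (insert 0 (set zs)) \<le> z" "z \<le> Max (insert 0 (set zs))"
      using that by (meson Min_le Max_ge finite_insert finite_set)+
    then show ?thesis
      using L(1) R(1) by linarith
  qed
  then have "\<forall>z\<in>set zs. L < z \<and> z < R"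
    by simp
  moreover have "L < R"
    using bounds[of 0] by auto
  moreover have "sorted_wrt (<) zs"
    using p by (simp add: sorted_simple_roots_def)
  ultimately have sorted: "sorted_wrt (<) (L # zs @ [R])"
    by (auto simp: sorted_wrt_append)
  have sign: "0 < (-1) ^ (Suc n - k) * poly q ((L # zs @ [R]) ! k)" if k: "k \<le> Suc n" for k
  proof -
    consider "k = 0" | "0 < k" "k \<le> n" | "k = Suc n"
      using k by linarith
    then show ?thesis
    proof cases
      case 1
      then show ?thesis using L(2) by simp
    next
      case 2
      then have "(L # zs @ [R]) ! k = zs ! (k - 1)" "Suc n - k = length zs - (k - 1)"
        by (auto simp: n_def nth_Cons' nth_append)
      then show ?thesis
        using 2 hermite_step_sign_at_root[OF p, of "k - 1" c] by (simp add: q_def n_def)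
    next
      case 3
      then show ?thesis using R(2) by (simp add: n_def nth_append)
    qed
  qed
  show ?thesis
  proof (rule that)
    show "sorted_wrt (<) (L # zs @ [R])"
      by (rule sorted)
    show "\<forall>k\<le>Suc (length zs).
      0 < (-1) ^ (Suc (length zs) - k) * poly (hermite_step c p) ((L # zs @ [R]) ! k)"
      unfolding n_def[symmetric] q_def[symmetric] using sign by blast
  qed
qed

lemma hermite_step_interleaved:
  assumes p: "sorted_simple_roots p zs"
  shows "\<exists>ws. sorted_simple_roots (hermite_step c p) ws \<and> length ws = Suc (length zs) \<and>
    interleaved ws zs"
proof -
  obtain L R where bs: "sorted_wrt (<) (L # zs @ [R])"
    and sign: "\<forall>k\<le>Suc (length zs).
      0 < (-1) ^ (Suc (length zs) - k) * poly (hermite_step c p) ((L # zs @ [R]) ! k)"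
    using hermite_step_alternating_signs[OF p] by blast
  note q = hermite_step_sorted_simple_roots_degree[OF p, of c]
  obtain ws where ws: "sorted_simple_roots (hermite_step c p) ws" "length ws = Suc (length zs)"
    and between: "\<forall>k<Suc (length zs).
      (L # zs @ [R]) ! k < ws ! k \<and> ws ! k < (L # zs @ [R]) ! Suc k"
    using sorted_simple_roots_of_sign_changes[OF q(2,1) bs _ sign] by auto
  have "ws ! k < zs ! k \<and> zs ! k < ws ! Suc k" if k: "k < length zs" for k
  proof -
    have "ws ! k < (L # zs @ [R]) ! Suc k" "(L # zs @ [R]) ! Suc k < ws ! Suc k"
      using between k by auto
    moreover have "(L # zs @ [R]) ! Suc k = zs ! k"
      using k by (simp add: nth_append)
    ultimately show ?thesis
      by simp
  qed
  then have "interleaved ws zs"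
    unfolding interleaved_def using ws(2) by auto
  then show ?thesis
    using ws by blast
qed

text \<open>At a zero \<open>w\<close> of \<open>hermite_step c p\<close> the perturbed polynomial equals \<open>M * poly p w\<close>,
  which has the sign the perturbed polynomial takes just to the right of its zero in the
  same gap of \<open>zs\<close>.\<close>
lemma hermite_step_add_zero_less:
  assumes p: "sorted_simple_roots p zs"
    and ws: "sorted_simple_roots (hermite_step c p) ws" "interleaved ws zs" "length ws = Suc (length zs)"
    and ys: "sorted_simple_roots (hermite_step (c + M) p) ys" "interleaved ys zs" "length ys = Suc (length zs)"
    and M: "0 < M" and k: "k \<le> length zs"
  shows "ys ! k < ws ! k"
proof -
  define n where "n = length zs"
  define w where "w = ws ! k"
  note w_gap = interleaved_gap[OF ws(2,3) k, folded w_def]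
  have "poly (hermite_step c p) w = 0"
    using sorted_simple_roots_poly_eq_0[OF ws(1)] k ws(3) by (simp add: w_def)
  moreover have "0 < (-1) ^ (n - k) * poly p w"
    using sorted_simple_roots_sign_between[OF p k w_gap] by (simp add: n_def)
  ultimately have q_w: "0 < (-1) ^ (n - k) * poly (hermite_step (c + M) p) w"
    using M by (simp add: hermite_step_add mult.left_commute)
  have "poly (hermite_step (c + M) p) (ys ! k) = 0"
    using sorted_simple_roots_poly_eq_0[OF ys(1)] k ys(3) by simp
  then have "ys ! k \<noteq> w"
    using q_w by auto
  moreover have "\<not> w < ys ! k"
  proof
    assume "w < ys ! k"
    moreover have "ys ! (k - 1) < w" if "0 < k"
    proof -
      have "ys ! (k - 1) < zs ! (k - 1)"
        using ys(2) k that by (simp add: interleaved_def)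
      then show ?thesis
        using w_gap(1)[OF that] by simp
    qed
    ultimately have "0 < (-1) ^ (Suc n - k) * poly (hermite_step (c + M) p) w"
      using sorted_simple_roots_sign_between[OF ys(1), of k w] k ys(3) by (simp add: n_def)
    moreover have "(-1::real) ^ (Suc n - k) = - ((-1) ^ (n - k))"
      using k by (simp add: n_def Suc_diff_le)
    ultimately have "0 < - ((-1) ^ (n - k) * poly (hermite_step (c + M) p) w)"
      by (simp only: mult_minus_left)
    then show False
      using q_w by linarith
  qed
  ultimately show ?thesis
    by (simp add: w_def)
qed

lemma hermite_step_add_interleaved:
  assumes p: "sorted_simple_roots p zs"
    and ws: "sorted_simple_roots (hermite_step c p) ws" "interleaved ws zs" "length ws = Suc (length zs)"
    and ys: "sorted_simple_roots (hermite_step (c + M) p) ys" "interleaved ys zs" "length ys = Suc (length zs)"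
    and M: "0 < M"
  shows "interleaved ys ws"
  unfolding interleaved_def
proof (intro conjI allI impI)
  show "length ws \<le> length ys" "length ys \<le> Suc (length ws)"
    using ws(3) ys(3) by simp_all
  show "ys ! k < ws ! k" if "k < length ws" for k
    using hermite_step_add_zero_less[OF assms] that ws(3) by simp
  show "ws ! k < ys ! Suc k" if k: "Suc k < length ys" for k
  proof -
    have "ws ! k < zs ! k"
      using ws(2) ys(3) k by (simp add: interleaved_def)
    also have "zs ! k < ys ! Suc k"
      using ys(2,3) k by (simp add: interleaved_def)
    finally show ?thesis .
  qed
qed

section \<open>Zeros of \<open>Hphi\<close>\<close>

definition Hphi_roots :: "(nat \<Rightarrow> real) \<Rightarrow> nat \<Rightarrow> real list" where
  "Hphi_roots \<phi> n = sorted_list_of_set (zeros (Hphi \<phi> n))"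

lemma Hphi_roots_eqI: "sorted_simple_roots (Hphi \<phi> n) zs \<Longrightarrow> Hphi_roots \<phi> n = zs"
  by (simp add: Hphi_roots_def sorted_list_of_zeros)

lemma sorted_simple_roots_Hphi:
  "sorted_simple_roots (Hphi \<phi> n) (Hphi_roots \<phi> n) \<and> length (Hphi_roots \<phi> n) = n"
proof -
  have "\<exists>zs. sorted_simple_roots (Hphi \<phi> n) zs \<and> length zs = n"
  proof (induction n)
    case 0
    have "sorted_simple_roots (Hphi \<phi> 0) []"
      by (auto simp: sorted_simple_roots_def intro: exI[of _ 1])
    then show ?case
      by blast
  next
    case (Suc n)
    then obtain zs where "sorted_simple_roots (Hphi \<phi> n) zs" "length zs = n"
      by blast
    then obtain ws where "sorted_simple_roots (hermite_step (\<phi> (Suc n)) (Hphi \<phi> n)) ws"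
      "length ws = Suc n"
      using hermite_step_interleaved by blast
    then show ?case
      unfolding Hphi_Suc_hermite_step by blast
  qed
  then obtain zs where "sorted_simple_roots (Hphi \<phi> n) zs" "length zs = n"
    by blast
  then show ?thesis
    using Hphi_roots_eqI by simp
qed

lemma zeros_Hphi: "zeros (Hphi \<phi> n) = set (Hphi_roots \<phi> n)"
  using sorted_simple_roots_Hphi zeros_sorted_simple_roots by blast

lemma Hphi_roots_remove_at_interleaved:
  assumes "1 \<le> l"
  shows "interleaved (Hphi_roots \<phi> (Suc n)) (Hphi_roots (remove_at l \<phi>) n)"
proof -
  obtain c where "Hphi \<phi> (Suc n) = hermite_step c (Hphi (remove_at l \<phi>) n)"
    using Hphi_remove_at_step[OF assms] .
  moreover obtain ws where "sorted_simple_roots (hermite_step c (Hphi (remove_at l \<phi>) n)) ws"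
    "interleaved ws (Hphi_roots (remove_at l \<phi>) n)"
    using hermite_step_interleaved[OF sorted_simple_roots_Hphi[THEN conjunct1]] by blast
  ultimately show ?thesis
    using Hphi_roots_eqI by metis
qed

lemma Hphi_roots_perturb_interleaved:
  assumes l: "1 \<le> l" "l \<le> n" and M: "0 < M"
  shows "interleaved (Hphi_roots (perturb l M \<phi>) n) (Hphi_roots \<phi> n)"
proof -
  obtain m where n: "n = Suc m"
    using l by (cases n) auto
  define p where "p = Hphi (remove_at l \<phi>) m"
  define zs where "zs = Hphi_roots (remove_at l \<phi>) m"
  have p: "sorted_simple_roots p zs" "length zs = m"
    using sorted_simple_roots_Hphi by (simp_all add: p_def zs_def)
  have "Hphi \<phi> n = hermite_step (\<phi> l) p"
    using Hphi_remove_at[OF l(1)] l(2) by (simp add: n p_def)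
  then have ws: "sorted_simple_roots (hermite_step (\<phi> l) p) (Hphi_roots \<phi> n)"
    "length (Hphi_roots \<phi> n) = Suc (length zs)"
    using sorted_simple_roots_Hphi[of \<phi> n] p(2) n by simp_all
  have "Hphi (perturb l M \<phi>) n = hermite_step (\<phi> l + M) p"
    using Hphi_perturb[OF l(1)] l(2) by (simp add: n p_def)
  then have ys: "sorted_simple_roots (hermite_step (\<phi> l + M) p) (Hphi_roots (perturb l M \<phi>) n)"
    "length (Hphi_roots (perturb l M \<phi>) n) = Suc (length zs)"
    using sorted_simple_roots_Hphi[of "perturb l M \<phi>" n] p(2) n by simp_all
  have "interleaved (Hphi_roots \<phi> n) zs"
    using Hphi_roots_remove_at_interleaved[OF l(1)] by (simp add: n zs_def)
  moreover have "interleaved (Hphi_roots (perturb l M \<phi>) n) zs"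
    using Hphi_roots_remove_at_interleaved[OF l(1), of "perturb l M \<phi>"]
    by (simp add: n zs_def remove_at_perturb)
  ultimately show ?thesis
    using hermite_step_add_interleaved[OF p(1) ws(1) _ ws(2) ys(1) _ ys(2) M] by blast
qed

lemma Hphi_roots_perturb_le:
  assumes "1 \<le> l" "l \<le> n" "0 \<le> M" "i < n"
  shows "Hphi_roots (perturb l M \<phi>) n ! i \<le> Hphi_roots \<phi> n ! i"
proof (cases "M = 0")
  case True
  then have "perturb l M \<phi> = \<phi>"
    by (simp add: perturb_def)
  then show ?thesis
    by simp
next
  case False
  then have "interleaved (Hphi_roots (perturb l M \<phi>) n) (Hphi_roots \<phi> n)"
    using assms by (intro Hphi_roots_perturb_interleaved) auto
  then show ?thesis
    using assms(4) sorted_simple_roots_Hphi[of \<phi> n] by (simp add: interleaved_def less_imp_le)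
qed

lemma Hphi_roots_antimono:
  assumes le: "\<forall>j\<ge>1. \<phi> j \<le> \<rho> j" and i: "i < n"
  shows "Hphi_roots \<rho> n ! i \<le> Hphi_roots \<phi> n ! i"
proof -
  define \<psi> where "\<psi> m = (\<lambda>j. if j \<le> m then \<rho> j else \<phi> j)" for m
  have "Hphi_roots (\<psi> m) n ! i \<le> Hphi_roots \<phi> n ! i" if "m \<le> n" for m
    using that
  proof (induction m)
    case 0
    have "Hphi (\<psi> 0) n = Hphi \<phi> n"
      by (rule Hphi_cong) (simp add: \<psi>_def)
    then show ?case
      by (simp add: Hphi_roots_def)
  next
    case (Suc m)
    have "\<psi> (Suc m) = perturb (Suc m) (\<rho> (Suc m) - \<phi> (Suc m)) (\<psi> m)"
      by (auto simp: \<psi>_def perturb_def)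
    then have "Hphi_roots (\<psi> (Suc m)) n ! i \<le> Hphi_roots (\<psi> m) n ! i"
      using Hphi_roots_perturb_le[of "Suc m" n "\<rho> (Suc m) - \<phi> (Suc m)" i "\<psi> m"] Suc.prems le i
      by simp
    also have "\<dots> \<le> Hphi_roots \<phi> n ! i"
      using Suc by simp
    finally show ?case .
  qed
  moreover have "Hphi (\<psi> n) n = Hphi \<rho> n"
    by (rule Hphi_cong) (simp add: \<psi>_def)
  ultimately show ?thesis
    by (metis Hphi_roots_def order_refl)
qed

lemma interlaces_zeros_Hphi:
  assumes "interleaved (Hphi_roots \<phi> n) (Hphi_roots \<psi> m)" "0 < n"
  shows "interlaces (zeros (Hphi \<phi> n)) (zeros (Hphi \<psi> m))"
proof -
  have "Hphi_roots \<phi> n \<noteq> []"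
    using sorted_simple_roots_Hphi[of \<phi> n] assms(2) by auto
  then show ?thesis
    using interlaces_if_interleaved[OF assms(1)] by (simp add: zeros_Hphi)
qed

theorem theorem3p6:
  fixes \<phi> :: "nat \<Rightarrow> real"
  shows "(\<forall>n. Hphi \<phi> n \<noteq> 0 \<and> card (zeros (Hphi \<phi> n)) = n \<and>
            (\<forall>x\<in>zeros (Hphi \<phi> n). order x (Hphi \<phi> n) = 1) \<and>
            (\<forall>l\<ge>1. interlaces (zeros (Hphi \<phi> (Suc n))) (zeros (Hphi (remove_at l \<phi>) n))))
       \<and> (\<forall>\<rho> :: nat \<Rightarrow> real. (\<forall>j\<ge>1. \<phi> j \<le> \<rho> j) \<longrightarrow>
            (\<forall>n k. 1 \<le> k \<and> k \<le> n \<longrightarrow> kth_zero n \<rho> k \<le> kth_zero n \<phi> k))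
       \<and> (\<forall>l n (M::real). 1 \<le> l \<and> l \<le> n \<and> M \<noteq> 0 \<longrightarrow>
            (M > 0 \<longrightarrow> interlaces (zeros (Hphi (perturb l M \<phi>) n)) (zeros (Hphi \<phi> n))) \<and>
            (M < 0 \<longrightarrow> interlaces (zeros (Hphi \<phi> n)) (zeros (Hphi (perturb l M \<phi>) n))))"
proof (intro conjI allI impI ballI)
  fix n
  note roots = sorted_simple_roots_Hphi[of \<phi> n]
  show "Hphi \<phi> n \<noteq> 0"
    using roots sorted_simple_roots_degree by blast
  show "card (zeros (Hphi \<phi> n)) = n"
    using roots by (simp add: zeros_Hphi distinct_card strict_sorted_iff sorted_simple_roots_def)
  show "order x (Hphi \<phi> n) = 1" if "x \<in> zeros (Hphi \<phi> n)" for x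
    using roots order_sorted_simple_roots that zeros_Hphi by blast
  show "interlaces (zeros (Hphi \<phi> (Suc n))) (zeros (Hphi (remove_at l \<phi>) n))" if "1 \<le> l" for l
    using Hphi_roots_remove_at_interleaved[OF that] by (rule interlaces_zeros_Hphi) simp
next
  fix \<rho> :: "nat \<Rightarrow> real" and n k :: nat
  assume "\<forall>j\<ge>1. \<phi> j \<le> \<rho> j" "1 \<le> k \<and> k \<le> n"
  then have "Hphi_roots \<rho> n ! (k - 1) \<le> Hphi_roots \<phi> n ! (k - 1)"
    by (intro Hphi_roots_antimono) auto
  then show "kth_zero n \<rho> k \<le> kth_zero n \<phi> k"
    by (simp add: kth_zero_def Hphi_roots_def)
next
  fix l n :: nat and M :: real
  assume l: "1 \<le> l \<and> l \<le> n \<and> M \<noteq> 0"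
  show "interlaces (zeros (Hphi (perturb l M \<phi>) n)) (zeros (Hphi \<phi> n))" if "M > 0"
    using Hphi_roots_perturb_interleaved[of l n M \<phi>] l that by (auto intro: interlaces_zeros_Hphi)
  show "interlaces (zeros (Hphi \<phi> n)) (zeros (Hphi (perturb l M \<phi>) n))" if "M < 0"
    using Hphi_roots_perturb_interleaved[of l n "- M" "perturb l M \<phi>"] l that
    by (auto simp: perturb_perturb_uminus intro: interlaces_zeros_Hphi)
qed

end
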